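(* Let $G=(V,E,\Omega)$ be a connected finite graph with vertex set $V\subset\mathbb{R}^n$, edge set $E$ and a non-empty set $\Omega\subset V$, let $f:\Omega\to\mathbb{R}$, and let $u:V\to\mathbb{R}$ be the Kirszbraun extension of $f$ on $G$. Then $$\sup_{x,y\in V,\,x\neq y}\frac{|u(x)-u(y)|}{d_g(x,y)}\le\sup_{x,y\in\Omega,\,x\ne y}\frac{|f(x)-f(y)|}{d_g(x,y)},$$ and $\inf_{z\in\Omega}f(z)\le u(x)\le\sup_{z\in\Omega}f(z)$ for all $x\in V$.
   Context: For $x\in V$, $S(x):=\{y\in V:(x,y)\in E\}$; $\|\cdot\|$ is the Euclidean norm. For a finite set $A\subset\mathbb{R}^n$, $g:A\to\mathbb{R}$ and $x\in\mathbb{R}^n\setminus A$, $K(g,A)(x)$ is the unique $y\in\mathbb{R}$ minimizing $\sup_{a\in A}|g(a)-y|/\|a-x\|$. A Kirszbraun extension of $f$ on $G$ is a function $u:V\to\mathbb{R}$ with $u=f$ on $\Omega$ and $u(x)=K(u,S(x))(x)$ for all $x\in V\setminus\Omega$ (such $u$ exists and is unique in this real-valued setting). The geodesic metric $d_g$ of $G$: for $x,y\in V$, $d_g(x,y)$ is the infimum of $\sum_{i=1}^{k-1}\|x_{i+1}-x_i\|$ over all chains $x_1=x,x_2,\dots,x_k=y$ in $V$ with $x_i\in S(x_{i+1})$ for $i=1,\dots,k-1$. *)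

theory Defs
  imports "HOL-Analysis.Analysis"
begin

definition nbhd :: "'a set \<Rightarrow> ('a \<times> 'a) set \<Rightarrow> 'a \<Rightarrow> 'a set" where
  "nbhd V E x = {y \<in> V. (x, y) \<in> E}"

definition kirsz_K :: "(real^'n \<Rightarrow> real) \<Rightarrow> (real^'n) set \<Rightarrow> real^'n \<Rightarrow> real" where
  "kirsz_K g A x = (THE y. \<forall>z.
      (SUP a\<in>A. \<bar>g a - y\<bar> / norm (a - x)) \<le> (SUP a\<in>A. \<bar>g a - z\<bar> / norm (a - x)))"

definition is_kirszbraun_ext ::
  "(real^'n) set \<Rightarrow> ((real^'n) \<times> (real^'n)) set \<Rightarrow> (real^'n) set
     \<Rightarrow> (real^'n \<Rightarrow> real) \<Rightarrow> (real^'n \<Rightarrow> real) \<Rightarrow> bool" where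
  "is_kirszbraun_ext V E \<Omega> f u \<longleftrightarrow>
     (\<forall>x\<in>\<Omega>. u x = f x) \<and> (\<forall>x\<in>V - \<Omega>. u x = kirsz_K u (nbhd V E x) x)"

text \<open>Chains x_1 = x, ..., x_k = y (as a list, k \<ge> 1) in V with x_i \<in> S(x_{i+1}).\<close>
definition is_chain :: "'a set \<Rightarrow> ('a \<times> 'a) set \<Rightarrow> 'a list \<Rightarrow> 'a \<Rightarrow> 'a \<Rightarrow> bool" where
  "is_chain V E xs x y \<longleftrightarrow> xs \<noteq> [] \<and> hd xs = x \<and> last xs = y \<and> set xs \<subseteq> V \<and>
     (\<forall>i. Suc i < length xs \<longrightarrow> (xs ! Suc i, xs ! i) \<in> E)"

definition chain_length :: "(real^'n) list \<Rightarrow> real" where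
  "chain_length xs = (\<Sum>i<length xs - 1. norm (xs ! Suc i - xs ! i))"

definition geod_dist ::
  "(real^'n) set \<Rightarrow> ((real^'n) \<times> (real^'n)) set \<Rightarrow> real^'n \<Rightarrow> real^'n \<Rightarrow> real" where
  "geod_dist V E x y = Inf {chain_length xs | xs. is_chain V E xs x y}"

definition finite_graph :: "'a set \<Rightarrow> ('a \<times> 'a) set \<Rightarrow> bool" where
  "finite_graph V E \<longleftrightarrow> finite V \<and> E \<subseteq> V \<times> V \<and> sym E \<and> (\<forall>x. (x, x) \<notin> E)"

definition graph_connected :: "'a set \<Rightarrow> ('a \<times> 'a) set \<Rightarrow> bool" where
  "graph_connected V E \<longleftrightarrow> (\<forall>x\<in>V. \<forall>y\<in>V. \<exists>xs. is_chain V E xs x y)"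

definition sup0 :: "real set \<Rightarrow> real" where
  "sup0 S = Sup (insert 0 S)"

end

theory Submission
  imports Defs
begin

text \<open>At an interior vertex x the value u x minimises the largest weighted deviation from the
  neighbours, so the maximal deviation is attained both by a neighbour above u x and by one below.
  Consequently the set where u is maximal (or minimal) is closed under passing to neighbours of
  interior vertices, and by connectivity it meets \<open>\<Omega>\<close>; this gives the bounds by f.
  For the Lipschitz bound let L be the steepest slope of u along an edge. Starting from a steepest
  edge one can keep descending, and dually keep ascending, along edges of slope L until \<open>\<Omega>\<close> is
  reached at both ends. The resulting boundary points \<open>\<omega>\<^sub>1\<close>, \<open>\<omega>\<^sub>2\<close> satisfy
  \<open>L * d\<^sub>g \<omega>\<^sub>1 \<omega>\<^sub>2 \<le> f \<omega>\<^sub>1 - f \<omega>\<^sub>2\<close>, so L is at most the Lipschitz constant of f on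
  \<open>\<Omega>\<close>, and summing along chains bounds the quotients of u.\<close>

section \<open>Chains and the geodesic distance\<close>

lemma chain_length_singleton [simp]: "chain_length [a] = 0"
  by (simp add: chain_length_def)

lemma chain_length_Cons_Cons [simp]:
  "chain_length (a # b # xs) = norm (b - a) + chain_length (b # xs)"
  unfolding chain_length_def by (simp only: length_Cons diff_Suc_1 sum.lessThan_Suc_shift) simp

lemma chain_length_nonneg: "0 \<le> chain_length xs"
  unfolding chain_length_def by (simp add: sum_nonneg)

lemma is_chain_Nil [simp]: "\<not> is_chain V E [] x y"
  by (simp add: is_chain_def)

lemma is_chain_singleton [simp]: "is_chain V E [a] x y \<longleftrightarrow> a = x \<and> a = y \<and> a \<in> V"
  by (auto simp: is_chain_def)

lemma is_chain_Cons_Cons: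
  "is_chain V E (a # b # xs) x y \<longleftrightarrow> a = x \<and> a \<in> V \<and> (b, a) \<in> E \<and> is_chain V E (b # xs) b y"
  unfolding is_chain_def
proof (intro iffI conjI; (elim conjE)?)
  assume edges: "\<forall>i. Suc i < length (a # b # xs) \<longrightarrow> ((a # b # xs) ! Suc i, (a # b # xs) ! i) \<in> E"
  then show "(b, a) \<in> E"
    by (metis Suc_less_eq length_Cons nth_Cons_0 nth_Cons_Suc zero_less_Suc)
  show "\<forall>i. Suc i < length (b # xs) \<longrightarrow> ((b # xs) ! Suc i, (b # xs) ! i) \<in> E"
    using edges by (metis Suc_less_eq length_Cons nth_Cons_Suc)
qed (auto simp: nth_Cons split: nat.splits)

lemma is_chain_append:
  assumes "is_chain V E xs x y" and "is_chain V E ys y z"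
  shows "is_chain V E (xs @ tl ys) x z \<and> chain_length (xs @ tl ys) = chain_length xs + chain_length ys"
  using assms
proof (induction xs arbitrary: x rule: induct_list012)
  case (2 a)
  then obtain zs where "ys = y # zs" by (cases ys) (auto simp: is_chain_def)
  with 2 show ?case by auto
next
  case (3 a b zs)
  then show ?case by (auto simp: is_chain_Cons_Cons)
qed simp_all

lemma is_chain_rev:
  assumes "sym E" and "is_chain V E xs x y"
  shows "is_chain V E (rev xs) y x \<and> chain_length (rev xs) = chain_length xs"
  using assms(2)
proof (induction xs arbitrary: x rule: induct_list012)
  case (3 a b zs)
  then have chain: "a = x" "a \<in> V" "(b, a) \<in> E" "is_chain V E (b # zs) b y"
    by (auto simp: is_chain_Cons_Cons)
  have "(a, b) \<in> E" "b \<in> V"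
    using chain(3,4) assms(1) by (auto simp: is_chain_def dest: symD)
  then have "is_chain V E [b, a] b a"
    using chain(2) by (simp add: is_chain_Cons_Cons)
  from is_chain_append[OF "3.IH"(2)[OF chain(4), THEN conjunct1] this] "3.IH"(2)[OF chain(4)] chain(1)
  show ?case by (simp add: norm_minus_commute)
qed simp_all

lemma norm_le_chain_length: "is_chain V E xs x y \<Longrightarrow> norm (y - x) \<le> chain_length xs"
proof (induction xs arbitrary: x rule: induct_list012)
  case (3 a b zs)
  then have "a = x" "norm (y - b) \<le> chain_length (b # zs)"
    by (auto simp: is_chain_Cons_Cons)
  moreover have "norm (y - x) \<le> norm (b - x) + norm (y - b)"
    using norm_triangle_ineq[of "b - x" "y - b"] by simp
  ultimately show ?case by simp
qed simp_all

lemma lipschitz_along_chain: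
  fixes u :: "real^'n \<Rightarrow> real"
  assumes "\<And>p q. (p, q) \<in> E \<Longrightarrow> \<bar>u p - u q\<bar> \<le> L * norm (p - q)"
  shows "is_chain V E xs x y \<Longrightarrow> \<bar>u x - u y\<bar> \<le> L * chain_length xs"
proof (induction xs arbitrary: x rule: induct_list012)
  case (3 a b zs)
  then have "a = x" "(b, a) \<in> E" "\<bar>u b - u y\<bar> \<le> L * chain_length (b # zs)"
    by (auto simp: is_chain_Cons_Cons)
  moreover have "\<bar>u b - u a\<bar> \<le> L * norm (b - a)"
    using assms \<open>(b, a) \<in> E\<close> by blast
  ultimately have "\<bar>u x - u y\<bar> \<le> L * norm (b - a) + L * chain_length (b # zs)"
    by (smt (verit))
  then show ?case by (simp add: distrib_left)
qed simp_all

lemma geod_dist_le_chain_length: "is_chain V E xs x y \<Longrightarrow> geod_dist V E x y \<le> chain_length xs"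
  unfolding geod_dist_def
  by (rule cInf_lower) (auto intro!: bdd_belowI[of _ 0] chain_length_nonneg)

lemma le_geod_dist:
  "is_chain V E xs x y \<Longrightarrow> (\<And>xs. is_chain V E xs x y \<Longrightarrow> c \<le> chain_length xs) \<Longrightarrow> c \<le> geod_dist V E x y"
  unfolding geod_dist_def by (rule cInf_greatest) auto

lemma norm_le_geod_dist: "is_chain V E xs x y \<Longrightarrow> norm (y - x) \<le> geod_dist V E x y"
  by (rule le_geod_dist) (use norm_le_chain_length in auto)

lemma geod_dist_self: "x \<in> V \<Longrightarrow> geod_dist V E x x = 0"
  using geod_dist_le_chain_length[of V E "[x]"] norm_le_geod_dist[of V E "[x]"] by fastforce

lemma geod_dist_edge:
  "(b, a) \<in> E \<Longrightarrow> a \<in> V \<Longrightarrow> b \<in> V \<Longrightarrow> geod_dist V E a b \<le> norm (b - a)"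
  using geod_dist_le_chain_length[of V E "[a, b]" a b] by (simp add: is_chain_Cons_Cons)

lemma geod_dist_commute:
  assumes "sym E"
  shows "geod_dist V E x y = geod_dist V E y x"
proof -
  have "{chain_length xs |xs. is_chain V E xs x y} \<subseteq> {chain_length xs |xs. is_chain V E xs y x}"
    for x y
  proof safe
    fix xs assume "is_chain V E xs x y"
    with is_chain_rev[OF assms this]
    show "\<exists>ys. chain_length xs = chain_length ys \<and> is_chain V E ys y x" by metis
  qed
  then have "{chain_length xs |xs. is_chain V E xs x y} = {chain_length xs |xs. is_chain V E xs y x}"
    by (intro subset_antisym)
  then show ?thesis
    unfolding geod_dist_def by simp
qed

lemma geod_dist_triangle:
  assumes "is_chain V E xs x y" and "is_chain V E ys y z"
  shows "geod_dist V E x z \<le> geod_dist V E x y + geod_dist V E y z"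
proof -
  have "geod_dist V E x z - geod_dist V E x y \<le> geod_dist V E y z"
  proof (rule le_geod_dist[OF assms(2)])
    fix ys assume ys: "is_chain V E ys y z"
    have "geod_dist V E x z - chain_length ys \<le> geod_dist V E x y"
    proof (rule le_geod_dist[OF assms(1)])
      fix xs assume "is_chain V E xs x y"
      from is_chain_append[OF this ys] show "geod_dist V E x z - chain_length ys \<le> chain_length xs"
        using geod_dist_le_chain_length by fastforce
    qed
    then show "geod_dist V E x z - geod_dist V E x y \<le> chain_length ys" by simp
  qed
  then show ?thesis by simp
qed

lemma lipschitz_geod_dist:
  fixes u :: "real^'n \<Rightarrow> real"
  assumes "\<And>p q. (p, q) \<in> E \<Longrightarrow> \<bar>u p - u q\<bar> \<le> L * norm (p - q)" and "0 \<le> L"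
    and "is_chain V E xs x y"
  shows "\<bar>u x - u y\<bar> \<le> L * geod_dist V E x y"
proof (cases "L = 0")
  case True
  then show ?thesis using lipschitz_along_chain[OF assms(1,3)] by simp
next
  case False
  then have "0 < L" using assms(2) by simp
  have "\<bar>u x - u y\<bar> / L \<le> geod_dist V E x y"
  proof (rule le_geod_dist[OF assms(3)])
    fix xs assume "is_chain V E xs x y"
    from lipschitz_along_chain[OF assms(1) this] show "\<bar>u x - u y\<bar> / L \<le> chain_length xs"
      using \<open>0 < L\<close> by (simp add: pos_divide_le_eq mult.commute)
  qed
  then show ?thesis using \<open>0 < L\<close> by (simp add: pos_divide_le_eq mult.commute)
qed

lemma chain_meets_boundary:
  assumes "is_chain V E xs x y" and "y \<in> \<Omega>" and "x \<in> W"
    and W_closed: "\<And>v a. v \<in> W \<Longrightarrow> v \<notin> \<Omega> \<Longrightarrow> (a, v) \<in> E \<Longrightarrow> a \<in> W"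
  shows "W \<inter> \<Omega> \<noteq> {}"
  using assms(1,3)
proof (induction xs arbitrary: x rule: induct_list012)
  case (3 a b zs)
  then have "a = x" "(b, a) \<in> E" "is_chain V E (b # zs) b y"
    by (auto simp: is_chain_Cons_Cons)
  with 3 W_closed show ?case by blast
qed (use assms(2) in auto)

section \<open>The objective minimised by the Kirszbraun operator\<close>

definition kirsz_obj :: "('a::real_normed_vector \<Rightarrow> real) \<Rightarrow> 'a set \<Rightarrow> 'a \<Rightarrow> real \<Rightarrow> real" where
  "kirsz_obj g A x y = (SUP a\<in>A. \<bar>g a - y\<bar> / norm (a - x))"

lemma kirsz_obj_eq_Max:
  "finite A \<Longrightarrow> A \<noteq> {} \<Longrightarrow> kirsz_obj g A x y = Max ((\<lambda>a. \<bar>g a - y\<bar> / norm (a - x)) ` A)"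
  unfolding kirsz_obj_def by (simp add: cSup_eq_Max)

lemma kirsz_obj_ge: "finite A \<Longrightarrow> a \<in> A \<Longrightarrow> \<bar>g a - y\<bar> / norm (a - x) \<le> kirsz_obj g A x y"
  by (subst kirsz_obj_eq_Max) auto

lemma kirsz_obj_less:
  "finite A \<Longrightarrow> A \<noteq> {} \<Longrightarrow> (\<And>a. a \<in> A \<Longrightarrow> \<bar>g a - y\<bar> / norm (a - x) < c) \<Longrightarrow> kirsz_obj g A x y < c"
  by (subst kirsz_obj_eq_Max) auto

lemma kirsz_obj_attained:
  assumes "finite A" and "A \<noteq> {}"
  shows "\<exists>a\<in>A. kirsz_obj g A x y = \<bar>g a - y\<bar> / norm (a - x)"
proof -
  have "Max ((\<lambda>a. \<bar>g a - y\<bar> / norm (a - x)) ` A) \<in> (\<lambda>a. \<bar>g a - y\<bar> / norm (a - x)) ` A"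
    using assms by (intro Max_in) auto
  then show ?thesis by (auto simp: kirsz_obj_eq_Max[OF assms])
qed

lemma kirsz_obj_uminus: "kirsz_obj (\<lambda>a. - g a) A x y = kirsz_obj g A x (- y)"
  unfolding kirsz_obj_def by (simp add: abs_minus_commute add.commute)

lemma continuous_on_Max_image:
  fixes h :: "'b \<Rightarrow> 'c::topological_space \<Rightarrow> real"
  assumes "finite A" "A \<noteq> {}" "\<And>a. a \<in> A \<Longrightarrow> continuous_on S (h a)"
  shows "continuous_on S (\<lambda>y. Max ((\<lambda>a. h a y) ` A))"
  using assms
proof (induction A rule: finite_ne_induct)
  case (insert a A)
  then have "(\<lambda>y. Max ((\<lambda>a. h a y) ` insert a A)) = (\<lambda>y. max (h a y) (Max ((\<lambda>a. h a y) ` A)))"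
    by auto
  with insert show ?case by (auto intro!: continuous_on_max)
qed simp

lemma continuous_on_kirsz_obj:
  assumes "finite A" and "A \<noteq> {}" and "x \<notin> A"
  shows "continuous_on S (kirsz_obj g A x)"
proof -
  have "continuous_on S (\<lambda>y. Max ((\<lambda>a. \<bar>g a - y\<bar> / norm (a - x)) ` A))"
    by (rule continuous_on_Max_image) (use assms in \<open>auto intro!: continuous_intros\<close>)
  then show ?thesis by (simp add: kirsz_obj_eq_Max[OF assms(1,2)])
qed

text \<open>Moving a minimiser downwards strictly decreases every term with \<open>g a < y\<close> and, by
  continuity, keeps the non-maximal terms below the maximum; so some maximal term must lie above.\<close>
lemma kirsz_obj_minimizer_attained_above:
  fixes g :: "'a::real_normed_vector \<Rightarrow> real"
  assumes fin: "finite A" and ne: "A \<noteq> {}" and x: "x \<notin> A"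
    and min: "\<And>z. kirsz_obj g A x y \<le> kirsz_obj g A x z"
  shows "\<exists>a\<in>A. y \<le> g a \<and> \<bar>g a - y\<bar> / norm (a - x) = kirsz_obj g A x y"
proof (rule ccontr)
  assume no_max_above: "\<not> ?thesis"
  let ?m = "kirsz_obj g A x y"
  have "\<forall>\<^sub>F z in at_left y. \<bar>g a - z\<bar> / norm (a - x) < ?m" if a: "a \<in> A" for a
  proof (cases "y \<le> g a")
    case True
    then have "\<bar>g a - y\<bar> / norm (a - x) < ?m"
      using kirsz_obj_ge[OF fin a, of g y x] no_max_above a by fastforce
    moreover have "((\<lambda>z. \<bar>g a - z\<bar> / norm (a - x)) \<longlongrightarrow> \<bar>g a - y\<bar> / norm (a - x)) (at_left y)"
      using a x by (intro tendsto_intros) auto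
    ultimately show ?thesis using order_tendstoD(2) by blast
  next
    case False
    have "norm (a - x) > 0" using x a by auto
    have "\<bar>g a - z\<bar> / norm (a - x) < ?m" if "z \<in> {g a<..<y}" for z
    proof -
      have "\<bar>g a - z\<bar> < \<bar>g a - y\<bar>" using that by auto
      with \<open>norm (a - x) > 0\<close> have "\<bar>g a - z\<bar> / norm (a - x) < \<bar>g a - y\<bar> / norm (a - x)"
        by (simp add: divide_strict_right_mono)
      then show ?thesis using kirsz_obj_ge[OF fin a, of g y x] by linarith
    qed
    then show ?thesis
      using eventually_at_left_real[of "g a" y] False by (auto elim: eventually_mono)
  qed
  then have "\<forall>\<^sub>F z in at_left y. \<forall>a\<in>A. \<bar>g a - z\<bar> / norm (a - x) < ?m"
    using fin by (simp add: eventually_ball_finite)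
  then obtain z where "\<forall>a\<in>A. \<bar>g a - z\<bar> / norm (a - x) < ?m"
    using eventually_happens' trivial_limit_at_left_real by blast
  then have "kirsz_obj g A x z < ?m" using kirsz_obj_less[OF fin ne] by blast
  with min show False by (meson not_le)
qed

lemma kirsz_obj_minimizer_attained_below:
  fixes g :: "'a::real_normed_vector \<Rightarrow> real"
  assumes "finite A" and "A \<noteq> {}" and "x \<notin> A"
    and min: "\<And>z. kirsz_obj g A x y \<le> kirsz_obj g A x z"
  shows "\<exists>a\<in>A. g a \<le> y \<and> \<bar>g a - y\<bar> / norm (a - x) = kirsz_obj g A x y"
proof -
  have "kirsz_obj (\<lambda>a. - g a) A x (- y) \<le> kirsz_obj (\<lambda>a. - g a) A x z" for z
    using min[of "- z"] by (simp add: kirsz_obj_uminus)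
  from kirsz_obj_minimizer_attained_above[OF assms(1-3) this] show ?thesis
    by (auto simp: kirsz_obj_uminus abs_minus_commute)
qed

lemma kirsz_obj_minimizer_unique:
  fixes g :: "'a::real_normed_vector \<Rightarrow> real"
  assumes fin: "finite A" and ne: "A \<noteq> {}" and x: "x \<notin> A"
    and min: "\<And>y z. y \<in> {y1, y2} \<Longrightarrow> kirsz_obj g A x y \<le> kirsz_obj g A x z"
  shows "y1 = y2"
proof -
  have "\<not> y < y'" if y: "y \<in> {y1, y2}" and y': "y' \<in> {y1, y2}" for y y'
  proof
    assume "y < y'"
    obtain a where a: "a \<in> A" "g a \<le> y" "\<bar>g a - y\<bar> / norm (a - x) = kirsz_obj g A x y"
      using kirsz_obj_minimizer_attained_below[OF fin ne x min[OF y]] by blast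
    have "norm (a - x) > 0" using x a by auto
    with \<open>y < y'\<close> a(2) have "\<bar>g a - y\<bar> / norm (a - x) < \<bar>g a - y'\<bar> / norm (a - x)"
      by (simp add: divide_strict_right_mono)
    also have "\<dots> \<le> kirsz_obj g A x y'" by (rule kirsz_obj_ge[OF fin a(1)])
    also have "\<dots> \<le> kirsz_obj g A x y" by (rule min[OF y'])
    finally show False using a(3) by simp
  qed
  then show ?thesis by (meson insertCI linorder_neqE)
qed

text \<open>On \<open>[Min (g ` A), Max (g ` A)]\<close> the continuous objective attains its minimum, and
  clamping any argument into this interval does not increase the objective.\<close>
lemma kirsz_obj_minimizer_exists:
  fixes g :: "'a::real_normed_vector \<Rightarrow> real"
  assumes fin: "finite A" and ne: "A \<noteq> {}" and x: "x \<notin> A"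
  shows "\<exists>y. \<forall>z. kirsz_obj g A x y \<le> kirsz_obj g A x z"
proof -
  let ?lo = "Min (g ` A)" and ?hi = "Max (g ` A)"
  have "?lo \<le> ?hi" using fin ne by (auto intro: Min_le_iff[THEN iffD2])
  then obtain y where "y \<in> {?lo..?hi}" and y: "\<forall>z\<in>{?lo..?hi}. kirsz_obj g A x y \<le> kirsz_obj g A x z"
    using continuous_attains_inf[OF compact_Icc _ continuous_on_kirsz_obj[OF assms, where g = g], of ?lo ?hi] by auto
  have "kirsz_obj g A x y \<le> kirsz_obj g A x z" for z
  proof -
    let ?c = "max ?lo (min ?hi z)"
    obtain a where a: "a \<in> A" "kirsz_obj g A x ?c = \<bar>g a - ?c\<bar> / norm (a - x)"
      using kirsz_obj_attained[OF fin ne] by blast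
    have "?lo \<le> g a" "g a \<le> ?hi" using fin a(1) by auto
    then have "\<bar>g a - ?c\<bar> \<le> \<bar>g a - z\<bar>" by linarith
    then have "kirsz_obj g A x ?c \<le> \<bar>g a - z\<bar> / norm (a - x)"
      unfolding a(2) by (simp add: divide_right_mono)
    also have "\<dots> \<le> kirsz_obj g A x z" by (rule kirsz_obj_ge[OF fin a(1)])
    finally have "kirsz_obj g A x ?c \<le> kirsz_obj g A x z" .
    moreover have "?c \<in> {?lo..?hi}" using \<open>?lo \<le> ?hi\<close> by auto
    ultimately show ?thesis using y by (meson order_trans)
  qed
  then show ?thesis by blast
qed

lemma kirsz_K_eqI:
  assumes "finite A" and "A \<noteq> {}" and "x \<notin> A"
    and "\<And>z. kirsz_obj g A x y \<le> kirsz_obj g A x z"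
  shows "kirsz_K g A x = y"
  unfolding kirsz_K_def kirsz_obj_def[symmetric]
  using assms kirsz_obj_minimizer_unique[OF assms(1-3)] by (intro the_equality) blast+

lemma kirsz_K_minimizes:
  assumes "finite A" and "A \<noteq> {}" and "x \<notin> A"
  shows "kirsz_obj g A x (kirsz_K g A x) \<le> kirsz_obj g A x z"
  using kirsz_obj_minimizer_exists[OF assms] kirsz_K_eqI[OF assms] by metis

lemma kirsz_K_uminus:
  assumes "finite A" and "A \<noteq> {}" and "x \<notin> A"
  shows "kirsz_K (\<lambda>a. - g a) A x = - kirsz_K g A x"
  by (rule kirsz_K_eqI[OF assms]) (simp add: kirsz_obj_uminus kirsz_K_minimizes[OF assms])

section \<open>Kirszbraun extensions on connected graphs\<close>

lemma sup0_upper: "finite S \<Longrightarrow> s \<in> S \<Longrightarrow> s \<le> sup0 S"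
  unfolding sup0_def by (rule cSup_upper) auto

lemma sup0_nonneg: "finite S \<Longrightarrow> 0 \<le> sup0 S"
  unfolding sup0_def by (rule cSup_upper) auto

lemma sup0_least: "0 \<le> c \<Longrightarrow> (\<And>s. s \<in> S \<Longrightarrow> s \<le> c) \<Longrightarrow> sup0 S \<le> c"
  unfolding sup0_def by (rule cSup_least) auto

locale kirszbraun_graph =
  fixes V :: "(real^'n) set" and E :: "((real^'n) \<times> (real^'n)) set" and \<Omega> :: "(real^'n) set"
    and f u :: "real^'n \<Rightarrow> real"
  assumes graph: "finite_graph V E" and connected: "graph_connected V E"
    and boundary_subset: "\<Omega> \<subseteq> V" and boundary_nonempty: "\<Omega> \<noteq> {}"
    and extension: "is_kirszbraun_ext V E \<Omega> f u"
begin

lemma finite_V: "finite V"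
  using graph by (simp add: finite_graph_def)

lemma edge_in_V: "(a, b) \<in> E \<Longrightarrow> a \<in> V \<and> b \<in> V"
  using graph by (auto simp: finite_graph_def)

lemma sym_E: "sym E"
  using graph by (simp add: finite_graph_def)

lemma edge_sym: "(a, b) \<in> E \<Longrightarrow> (b, a) \<in> E"
  using sym_E by (rule symD)

lemma edge_norm_pos: "(a, b) \<in> E \<Longrightarrow> 0 < norm (a - b)"
  using graph by (auto simp: finite_graph_def)

lemma in_nbhd_iff: "b \<in> nbhd V E a \<longleftrightarrow> (a, b) \<in> E"
  using edge_in_V by (auto simp: nbhd_def)

lemma finite_nbhd: "finite (nbhd V E x)"
  using finite_V by (simp add: nbhd_def)

lemma not_in_nbhd: "x \<notin> nbhd V E x"
  using edge_norm_pos by (force simp: in_nbhd_iff)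

lemma chain_exists: "x \<in> V \<Longrightarrow> y \<in> V \<Longrightarrow> \<exists>xs. is_chain V E xs x y"
  using connected by (simp add: graph_connected_def)

lemma geod_dist_nonneg: "x \<in> V \<Longrightarrow> y \<in> V \<Longrightarrow> 0 \<le> geod_dist V E x y"
  using chain_exists norm_le_geod_dist by (metis norm_ge_zero order_trans)

lemma geod_dist_pos: "x \<in> V \<Longrightarrow> y \<in> V \<Longrightarrow> x \<noteq> y \<Longrightarrow> 0 < geod_dist V E x y"
  using chain_exists norm_le_geod_dist by (metis order.strict_trans2 right_minus_eq zero_less_norm_iff)

lemma geod_dist_triangle_in_V:
  "x \<in> V \<Longrightarrow> y \<in> V \<Longrightarrow> z \<in> V \<Longrightarrow> geod_dist V E x z \<le> geod_dist V E x y + geod_dist V E y z"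
  using chain_exists geod_dist_triangle by metis

lemma nbhd_nonempty:
  assumes "x \<in> V" and "x \<notin> \<Omega>"
  shows "nbhd V E x \<noteq> {}"
proof -
  obtain \<omega> where "\<omega> \<in> \<Omega>" using boundary_nonempty by blast
  then obtain xs where chain: "is_chain V E xs x \<omega>"
    using chain_exists assms(1) boundary_subset by blast
  obtain b zs where "xs = x # b # zs"
  proof (cases xs)
    case (Cons a ys)
    with chain assms(2) \<open>\<omega> \<in> \<Omega>\<close> show ?thesis
      by (cases ys) (auto simp: is_chain_Cons_Cons intro: that)
  qed (use chain in simp)
  with chain have "(b, x) \<in> E" by (simp add: is_chain_Cons_Cons)
  then show ?thesis using edge_sym in_nbhd_iff by blast
qed

lemma u_boundary: "x \<in> \<Omega> \<Longrightarrow> u x = f x"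
  using extension by (simp add: is_kirszbraun_ext_def)

lemma u_minimizes:
  assumes "x \<in> V" and "x \<notin> \<Omega>"
  shows "kirsz_obj u (nbhd V E x) x (u x) \<le> kirsz_obj u (nbhd V E x) x z"
proof -
  have "u x = kirsz_K u (nbhd V E x) x"
    using extension assms by (simp add: is_kirszbraun_ext_def)
  then show ?thesis
    using kirsz_K_minimizes[OF finite_nbhd nbhd_nonempty[OF assms] not_in_nbhd] by simp
qed

lemma neighbour_above:
  "x \<in> V \<Longrightarrow> x \<notin> \<Omega> \<Longrightarrow>
    \<exists>a\<in>nbhd V E x. u x \<le> u a \<and> \<bar>u a - u x\<bar> / norm (a - x) = kirsz_obj u (nbhd V E x) x (u x)"
  using kirsz_obj_minimizer_attained_above[OF finite_nbhd nbhd_nonempty not_in_nbhd u_minimizes] .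

lemma neighbour_below:
  "x \<in> V \<Longrightarrow> x \<notin> \<Omega> \<Longrightarrow>
    \<exists>a\<in>nbhd V E x. u a \<le> u x \<and> \<bar>u a - u x\<bar> / norm (a - x) = kirsz_obj u (nbhd V E x) x (u x)"
  using kirsz_obj_minimizer_attained_below[OF finite_nbhd nbhd_nonempty not_in_nbhd u_minimizes] .

lemma kirszbraun_graph_uminus: "kirszbraun_graph V E \<Omega> (\<lambda>x. - f x) (\<lambda>x. - u x)"
proof
  show "is_kirszbraun_ext V E \<Omega> (\<lambda>x. - f x) (\<lambda>x. - u x)"
    using extension
    by (simp add: is_kirszbraun_ext_def kirsz_K_uminus[OF finite_nbhd nbhd_nonempty not_in_nbhd])
qed (use graph connected boundary_subset boundary_nonempty in auto)

text \<open>A neighbour above a maximal interior vertex forces its objective, hence the deviation of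
  every neighbour, to vanish.\<close>
lemma max_attained_on_boundary: "\<exists>\<omega>\<in>\<Omega>. \<forall>v\<in>V. u v \<le> u \<omega>"
proof -
  define W where "W = {v \<in> V. \<forall>w\<in>V. u w \<le> u v}"
  have "Max (u ` V) \<in> u ` V"
    using finite_V boundary_subset boundary_nonempty by (intro Max_in) auto
  then obtain x where "x \<in> V" "u x = Max (u ` V)" by (metis imageE)
  with finite_V have x: "x \<in> W" by (simp add: W_def)
  obtain \<omega> where \<omega>: "\<omega> \<in> \<Omega>" using boundary_nonempty by blast
  then obtain xs where chain: "is_chain V E xs x \<omega>"
    using \<open>x \<in> V\<close> boundary_subset chain_exists by blast
  have W_closed: "a \<in> W" if v: "v \<in> W" "v \<notin> \<Omega>" and av: "(a, v) \<in> E" for v a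
  proof -
    have "v \<in> V" "a \<in> V" using av edge_in_V by blast+
    have a: "a \<in> nbhd V E v" using av edge_sym in_nbhd_iff by blast
    obtain b where b: "b \<in> nbhd V E v" "u v \<le> u b"
        "\<bar>u b - u v\<bar> / norm (b - v) = kirsz_obj u (nbhd V E v) v (u v)"
      using neighbour_above[OF \<open>v \<in> V\<close> v(2)] by blast
    have "b \<in> V" using b(1) edge_in_V in_nbhd_iff by blast
    with v(1) have "u b \<le> u v" by (simp add: W_def)
    with b(2) have "u b = u v" by simp
    then have "\<bar>u a - u v\<bar> / norm (a - v) \<le> 0"
      using b(3) kirsz_obj_ge[OF finite_nbhd a, of u "u v" v] by simp
    moreover have "0 < norm (a - v)" using edge_norm_pos[OF av] .
    ultimately have "u a = u v" by (simp add: divide_le_0_iff)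
    with v(1) \<open>a \<in> V\<close> show "a \<in> W" by (simp add: W_def)
  qed
  have "W \<inter> \<Omega> \<noteq> {}" by (rule chain_meets_boundary[OF chain \<omega> x W_closed])
  then show ?thesis by (auto simp: W_def)
qed

lemma min_attained_on_boundary: "\<exists>\<omega>\<in>\<Omega>. \<forall>v\<in>V. u \<omega> \<le> u v"
  using kirszbraun_graph.max_attained_on_boundary[OF kirszbraun_graph_uminus] by simp

lemma boundary_bounds: "x \<in> V \<Longrightarrow> (INF z\<in>\<Omega>. f z) \<le> u x \<and> u x \<le> (SUP z\<in>\<Omega>. f z)"
proof -
  assume "x \<in> V"
  have "finite \<Omega>" using finite_V boundary_subset by (rule finite_subset[rotated])
  obtain \<omega>1 \<omega>2 where "\<omega>1 \<in> \<Omega>" "u \<omega>1 \<le> u x" "\<omega>2 \<in> \<Omega>" "u x \<le> u \<omega>2"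
    using min_attained_on_boundary max_attained_on_boundary \<open>x \<in> V\<close> by blast
  moreover have "(INF z\<in>\<Omega>. f z) \<le> f \<omega>1" "f \<omega>2 \<le> (SUP z\<in>\<Omega>. f z)"
    using \<open>finite \<Omega>\<close> \<open>\<omega>1 \<in> \<Omega>\<close> \<open>\<omega>2 \<in> \<Omega>\<close> by (auto intro: cINF_lower cSUP_upper)
  ultimately show ?thesis by (simp add: u_boundary)
qed

definition boundary_lip :: real where
  "boundary_lip = sup0 {\<bar>f x - f y\<bar> / geod_dist V E x y | x y. x \<in> \<Omega> \<and> y \<in> \<Omega> \<and> x \<noteq> y}"

lemma finite_boundary_quotients:
  "finite {\<bar>f x - f y\<bar> / geod_dist V E x y | x y. x \<in> \<Omega> \<and> y \<in> \<Omega> \<and> x \<noteq> y}"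
proof (rule finite_subset)
  show "finite ((\<lambda>(x, y). \<bar>f x - f y\<bar> / geod_dist V E x y) ` (\<Omega> \<times> \<Omega>))"
    using finite_V boundary_subset by (auto intro: finite_subset)
qed auto

lemma boundary_lip_nonneg: "0 \<le> boundary_lip"
  unfolding boundary_lip_def by (rule sup0_nonneg[OF finite_boundary_quotients])

lemma boundary_lip_upper:
  "x \<in> \<Omega> \<Longrightarrow> y \<in> \<Omega> \<Longrightarrow> x \<noteq> y \<Longrightarrow> \<bar>f x - f y\<bar> / geod_dist V E x y \<le> boundary_lip"
  unfolding boundary_lip_def by (rule sup0_upper[OF finite_boundary_quotients]) blast

text \<open>At an interior \<open>q\<close> the objective is exactly \<open>L\<close> (at least the slope towards \<open>p\<close>, at
  most \<open>L\<close>), so a neighbour below continues the descent with slope \<open>L\<close>.\<close>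
lemma steep_descent:
  assumes lip: "\<And>a b. (a, b) \<in> E \<Longrightarrow> \<bar>u a - u b\<bar> \<le> L * norm (a - b)" and "0 < L"
    and "(p, q) \<in> E" and "u p - u q = L * norm (p - q)"
  shows "\<exists>\<omega>\<in>\<Omega>. L * geod_dist V E q \<omega> \<le> u q - u \<omega>"
  using assms(3,4)
proof (induction "card {v \<in> V. u v < u q}" arbitrary: p q rule: less_induct)
  case less
  have "q \<in> V" using less.prems(1) edge_in_V by blast
  show ?case
  proof (cases "q \<in> \<Omega>")
    case True
    then show ?thesis using geod_dist_self[OF \<open>q \<in> V\<close>, of E] by force
  next
    case False
    let ?obj = "kirsz_obj u (nbhd V E q) q (u q)"
    have "p \<in> nbhd V E q" using less.prems(1) edge_sym in_nbhd_iff by blast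
    have "L = \<bar>u p - u q\<bar> / norm (p - q)"
      using less.prems edge_norm_pos[OF less.prems(1)] \<open>0 < L\<close> by simp
    then have "L \<le> ?obj"
      using kirsz_obj_ge[OF finite_nbhd \<open>p \<in> nbhd V E q\<close>, of u "u q" q] by simp
    obtain a where a: "a \<in> nbhd V E q" "u a \<le> u q" "\<bar>u a - u q\<bar> / norm (a - q) = ?obj"
      using neighbour_below[OF \<open>q \<in> V\<close> False] by blast
    have qa: "(q, a) \<in> E" using a(1) in_nbhd_iff by blast
    have "\<bar>u a - u q\<bar> / norm (a - q) \<le> L"
      using lip[OF qa] edge_norm_pos[OF qa]
      by (simp add: abs_minus_commute norm_minus_commute divide_le_eq)
    with \<open>L \<le> ?obj\<close> a have "\<bar>u a - u q\<bar> / norm (a - q) = L" by simp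
    then have step: "u q - u a = L * norm (q - a)"
      using a(2) edge_norm_pos[OF qa] by (simp add: norm_minus_commute field_simps)
    moreover have "0 < L * norm (q - a)" using \<open>0 < L\<close> edge_norm_pos[OF qa] by simp
    ultimately have "u a < u q" by linarith
    then have "{v \<in> V. u v < u a} \<subset> {v \<in> V. u v < u q}"
      using qa edge_in_V by auto
    then have "card {v \<in> V. u v < u a} < card {v \<in> V. u v < u q}"
      using finite_V by (simp add: psubset_card_mono)
    then obtain \<omega> where "\<omega> \<in> \<Omega>" and \<omega>: "L * geod_dist V E a \<omega> \<le> u a - u \<omega>"
      using less.hyps qa step by blast
    have "geod_dist V E q \<omega> \<le> geod_dist V E q a + geod_dist V E a \<omega>"
      using geod_dist_triangle_in_V qa edge_in_V boundary_subset \<open>\<omega> \<in> \<Omega>\<close> by blast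
    also have "\<dots> \<le> norm (q - a) + geod_dist V E a \<omega>"
      using geod_dist_edge[OF edge_sym[OF qa]] qa edge_in_V by (simp add: norm_minus_commute)
    finally have "L * geod_dist V E q \<omega> \<le> L * norm (q - a) + L * geod_dist V E a \<omega>"
      using \<open>0 < L\<close> by (simp add: distrib_left[symmetric])
    with step \<omega> have "L * geod_dist V E q \<omega> \<le> u q - u \<omega>" by linarith
    with \<open>\<omega> \<in> \<Omega>\<close> show ?thesis by blast
  qed
qed

lemma steepest_slope_le_boundary_lip:
  assumes lip: "\<And>a b. (a, b) \<in> E \<Longrightarrow> \<bar>u a - u b\<bar> \<le> L * norm (a - b)" and "0 < L"
    and "(p0, q0) \<in> E" and "\<bar>u p0 - u q0\<bar> = L * norm (p0 - q0)"
  shows "L \<le> boundary_lip"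
proof -
  obtain p q where pq: "(p, q) \<in> E" and steep: "u p - u q = L * norm (p - q)"
  proof (cases "u q0 \<le> u p0")
    case True
    with assms(3,4) that[of p0 q0] show ?thesis by simp
  next
    case False
    with assms(3,4) that[of q0 p0] show ?thesis by (simp add: edge_sym norm_minus_commute)
  qed
  have "p \<in> V" "q \<in> V" using pq edge_in_V by blast+
  obtain \<omega>2 where "\<omega>2 \<in> \<Omega>" and down: "L * geod_dist V E q \<omega>2 \<le> u q - u \<omega>2"
    using steep_descent[OF lip \<open>0 < L\<close> pq steep] by blast
  have "\<bar>- u a - - u b\<bar> \<le> L * norm (a - b)" if "(a, b) \<in> E" for a b
    using lip[OF that] by simp
  from kirszbraun_graph.steep_descent[OF kirszbraun_graph_uminus this \<open>0 < L\<close> edge_sym[OF pq]] steep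
  obtain \<omega>1 where "\<omega>1 \<in> \<Omega>" and up: "L * geod_dist V E p \<omega>1 \<le> u \<omega>1 - u p"
    by (auto simp: norm_minus_commute)
  have "\<omega>1 \<in> V" "\<omega>2 \<in> V" using \<open>\<omega>1 \<in> \<Omega>\<close> \<open>\<omega>2 \<in> \<Omega>\<close> boundary_subset by blast+
  have "geod_dist V E p q \<le> norm (p - q)"
    using geod_dist_edge[OF edge_sym[OF pq] \<open>p \<in> V\<close> \<open>q \<in> V\<close>] by (simp add: norm_minus_commute)
  then have "geod_dist V E \<omega>1 \<omega>2 \<le> geod_dist V E p \<omega>1 + norm (p - q) + geod_dist V E q \<omega>2"
    using geod_dist_triangle_in_V[of \<omega>1 p \<omega>2] geod_dist_triangle_in_V[of p q \<omega>2]
      geod_dist_commute[OF sym_E, of V \<omega>1 p] \<open>p \<in> V\<close> \<open>q \<in> V\<close> \<open>\<omega>1 \<in> V\<close> \<open>\<omega>2 \<in> V\<close>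
    by linarith
  then have "L * geod_dist V E \<omega>1 \<omega>2 \<le> L * geod_dist V E p \<omega>1 + L * norm (p - q) + L * geod_dist V E q \<omega>2"
    using mult_left_mono[of _ _ L] \<open>0 < L\<close> by (fastforce simp: distrib_left)
  also have "\<dots> \<le> u \<omega>1 - u \<omega>2" using up down steep by linarith
  finally have key: "L * geod_dist V E \<omega>1 \<omega>2 \<le> u \<omega>1 - u \<omega>2" .
  have "0 < L * norm (p - q)" using \<open>0 < L\<close> edge_norm_pos[OF pq] by simp
  moreover have "0 \<le> L * geod_dist V E p \<omega>1" "0 \<le> L * geod_dist V E q \<omega>2"
    using \<open>0 < L\<close> geod_dist_nonneg \<open>p \<in> V\<close> \<open>q \<in> V\<close> \<open>\<omega>1 \<in> V\<close> \<open>\<omega>2 \<in> V\<close> by simp_all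
  ultimately have "u \<omega>2 < u \<omega>1" using up down steep by linarith
  then have "\<omega>1 \<noteq> \<omega>2" by auto
  then have "0 < geod_dist V E \<omega>1 \<omega>2" using geod_dist_pos \<open>\<omega>1 \<in> V\<close> \<open>\<omega>2 \<in> V\<close> by blast
  with key have "L \<le> (u \<omega>1 - u \<omega>2) / geod_dist V E \<omega>1 \<omega>2" by (simp add: pos_le_divide_eq)
  also have "\<dots> \<le> \<bar>f \<omega>1 - f \<omega>2\<bar> / geod_dist V E \<omega>1 \<omega>2"
    using \<open>0 < geod_dist V E \<omega>1 \<omega>2\<close> \<open>\<omega>1 \<in> \<Omega>\<close> \<open>\<omega>2 \<in> \<Omega>\<close> by (simp add: u_boundary divide_right_mono)
  also have "\<dots> \<le> boundary_lip" using boundary_lip_upper \<open>\<omega>1 \<in> \<Omega>\<close> \<open>\<omega>2 \<in> \<Omega>\<close> \<open>\<omega>1 \<noteq> \<omega>2\<close> .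
  finally show ?thesis .
qed

lemma edge_lipschitz:
  assumes "(p, q) \<in> E"
  shows "\<bar>u p - u q\<bar> \<le> boundary_lip * norm (p - q)"
proof -
  let ?slopes = "(\<lambda>(a, b). \<bar>u a - u b\<bar> / norm (a - b)) ` E"
  define L where "L = Max ?slopes"
  have "finite E"
    using graph finite_subset[of E "V \<times> V"] by (auto simp: finite_graph_def)
  then have "\<bar>u a - u b\<bar> / norm (a - b) \<le> L" if "(a, b) \<in> E" for a b
    unfolding L_def using that by (intro Max_ge) force+
  then have lip: "\<bar>u a - u b\<bar> \<le> L * norm (a - b)" if "(a, b) \<in> E" for a b
    using that edge_norm_pos by (simp add: pos_divide_le_eq)
  have "L \<le> boundary_lip"
  proof (cases "L \<le> 0")
    case True
    with boundary_lip_nonneg show ?thesis by linarith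
  next
    case False
    have "L \<in> ?slopes" unfolding L_def using \<open>finite E\<close> assms by (intro Max_in) auto
    then obtain p0 q0 where "(p0, q0) \<in> E" and "\<bar>u p0 - u q0\<bar> / norm (p0 - q0) = L" by auto
    then have "\<bar>u p0 - u q0\<bar> = L * norm (p0 - q0)"
      using edge_norm_pos[of p0 q0] by (simp add: divide_eq_eq)
    with False lip \<open>(p0, q0) \<in> E\<close> show ?thesis by (intro steepest_slope_le_boundary_lip) auto
  qed
  then show ?thesis
    using lip[OF assms] mult_right_mono[of L boundary_lip "norm (p - q)"] by simp
qed

lemma lipschitz_on_V: "x \<in> V \<Longrightarrow> y \<in> V \<Longrightarrow> \<bar>u x - u y\<bar> \<le> boundary_lip * geod_dist V E x y"
  using lipschitz_geod_dist[OF edge_lipschitz boundary_lip_nonneg] chain_exists by blast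

end

theorem mainTheorem4:
  fixes V :: "(real^'n) set" and E :: "((real^'n) \<times> (real^'n)) set" and \<Omega> :: "(real^'n) set"
    and f u :: "real^'n \<Rightarrow> real"
  assumes "finite_graph V E" and "graph_connected V E"
    and "\<Omega> \<subseteq> V" and "\<Omega> \<noteq> {}"
    and "is_kirszbraun_ext V E \<Omega> f u"
  shows "sup0 {\<bar>u x - u y\<bar> / geod_dist V E x y | x y. x \<in> V \<and> y \<in> V \<and> x \<noteq> y}
           \<le> sup0 {\<bar>f x - f y\<bar> / geod_dist V E x y | x y. x \<in> \<Omega> \<and> y \<in> \<Omega> \<and> x \<noteq> y}
       \<and> (\<forall>x\<in>V. (INF z\<in>\<Omega>. f z) \<le> u x \<and> u x \<le> (SUP z\<in>\<Omega>. f z))"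
proof -
  interpret kirszbraun_graph V E \<Omega> f u
    using assms by unfold_locales
  have "\<bar>u x - u y\<bar> / geod_dist V E x y \<le> boundary_lip" if "x \<in> V" "y \<in> V" "x \<noteq> y" for x y
    using lipschitz_on_V[OF that(1,2)] geod_dist_pos[OF that] by (simp add: pos_divide_le_eq)
  then have "sup0 {\<bar>u x - u y\<bar> / geod_dist V E x y | x y. x \<in> V \<and> y \<in> V \<and> x \<noteq> y} \<le> boundary_lip"
    using boundary_lip_nonneg by (intro sup0_least) auto
  then show ?thesis
    using boundary_bounds unfolding boundary_lip_def by blast
qed

end
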